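(* Let $G$ be a tree with negative definite intersection matrix, $\mathcal N$ its set of nodes (vertices of degree $\ge 3$), and $x$ the Laufer operator with respect to $\mathcal N$. Let $n\in\mathcal N$ and let $v_1,\dots,v_s$ ($s\ge1$) be a chain of non-node vertices with $v_1$ adjacent to $n$, $v_j$ adjacent to $v_{j+1}$, of one of two types: (a) a bamboo: each $v_j$ has degree $2$ and $v_s$ is adjacent to a node $n'\neq n$; or (b) a leg: $v_s$ has degree $1$ and $v_1,\dots,v_{s-1}$ have degree $2$. Assume $b_{v_j}\ge2$ for all $j$, except that in case (b) with $s=1$ also $b_{v_1}=1$ is allowed. Let $\alpha$ be the determinant of the negative of the intersection matrix of $\{v_1,\dots,v_s\}$ and $\beta$ that of $\{v_2,\dots,v_s\}$ (with $\beta=1$ if $s=1$), so $\alpha/\beta=[b_{v_1},\dots,b_{v_s}]$. If $Z\in L$ satisfies $x(Z)=Z$, then $$m_{v_1}(Z)=\left\lceil\frac{\beta\,m_n(Z)+m_{n'}(Z)}{\alpha}\right\rceil,$$ where in case (b) one sets $m_{n'}(Z)=0$.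
   Context: $L=\bigoplus_v\mathbb ZE_v$ with $(E_v,E_w)$ = number of edges for $v\ne w$ and $(E_v,E_v)=-b_v$; $m_v(Z)$ is the coefficient of $E_v$ in $Z$. The Laufer operator $x(Z)$ is the unique coefficientwise-minimal $Z''\in L$ with $m_n(Z'')=m_n(Z)$ for all nodes $n$ and $(Z'',E_v)\le0$ for all non-node vertices $v$. $[b_1,\dots,b_s]=b_1-1/(b_2-1/(\cdots-1/b_s))$ is the negative continued fraction. *)

theory Defs
  imports Complex_Main "Jordan_Normal_Form.Determinant"
begin

text \<open>A plumbing graph: finite vertex set V, symmetric irreflexive adjacency E
  (simple graph, so the number of edges between distinct v, w is 0 or 1),
  and Euler numbers b.\<close>

definition graph_ok :: "'a set \<Rightarrow> ('a \<Rightarrow> 'a \<Rightarrow> bool) \<Rightarrow> bool" where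
  "graph_ok V E \<longleftrightarrow> finite V \<and> (\<forall>v w. E v w \<longrightarrow> v \<in> V \<and> w \<in> V)
     \<and> (\<forall>v w. E v w \<longleftrightarrow> E w v) \<and> (\<forall>v. \<not> E v v)"

definition edge_set :: "'a set \<Rightarrow> ('a \<Rightarrow> 'a \<Rightarrow> bool) \<Rightarrow> 'a set set" where
  "edge_set V E = {{v, w} | v w. v \<in> V \<and> w \<in> V \<and> E v w}"

definition is_tree :: "'a set \<Rightarrow> ('a \<Rightarrow> 'a \<Rightarrow> bool) \<Rightarrow> bool" where
  "is_tree V E \<longleftrightarrow> graph_ok V E \<and> V \<noteq> {}
     \<and> (\<forall>v\<in>V. \<forall>w\<in>V. (\<lambda>x y. E x y)\<^sup>*\<^sup>* v w)
     \<and> card (edge_set V E) + 1 = card V"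

definition degree :: "'a set \<Rightarrow> ('a \<Rightarrow> 'a \<Rightarrow> bool) \<Rightarrow> 'a \<Rightarrow> nat" where
  "degree V E v = card {w \<in> V. E v w}"

definition nodes :: "'a set \<Rightarrow> ('a \<Rightarrow> 'a \<Rightarrow> bool) \<Rightarrow> 'a set" where
  "nodes V E = {v \<in> V. degree V E v \<ge> 3}"

definition imat :: "('a \<Rightarrow> 'a \<Rightarrow> bool) \<Rightarrow> ('a \<Rightarrow> int) \<Rightarrow> 'a \<Rightarrow> 'a \<Rightarrow> int" where
  "imat E b v w = (if v = w then - b v else if E v w then 1 else 0)"

definition lattice :: "'a set \<Rightarrow> ('a \<Rightarrow> int) set" where
  "lattice V = {Z. \<forall>v. v \<notin> V \<longrightarrow> Z v = 0}"

definition iform :: "'a set \<Rightarrow> ('a \<Rightarrow> 'a \<Rightarrow> bool) \<Rightarrow> ('a \<Rightarrow> int) \<Rightarrow> ('a \<Rightarrow> int) \<Rightarrow> ('a \<Rightarrow> int) \<Rightarrow> int" where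
  "iform V E b Z Z' = (\<Sum>v\<in>V. \<Sum>w\<in>V. Z v * Z' w * imat E b v w)"

definition iform_E :: "'a set \<Rightarrow> ('a \<Rightarrow> 'a \<Rightarrow> bool) \<Rightarrow> ('a \<Rightarrow> int) \<Rightarrow> ('a \<Rightarrow> int) \<Rightarrow> 'a \<Rightarrow> int" where
  "iform_E V E b Z v = (\<Sum>w\<in>V. Z w * imat E b w v)"

definition neg_definite :: "'a set \<Rightarrow> ('a \<Rightarrow> 'a \<Rightarrow> bool) \<Rightarrow> ('a \<Rightarrow> int) \<Rightarrow> bool" where
  "neg_definite V E b \<longleftrightarrow> (\<forall>x :: 'a \<Rightarrow> real. (\<exists>v\<in>V. x v \<noteq> 0) \<longrightarrow>
      (\<Sum>v\<in>V. \<Sum>w\<in>V. x v * x w * real_of_int (imat E b v w)) < 0)"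

definition laufer_set :: "'a set \<Rightarrow> ('a \<Rightarrow> 'a \<Rightarrow> bool) \<Rightarrow> ('a \<Rightarrow> int) \<Rightarrow> ('a \<Rightarrow> int) \<Rightarrow> ('a \<Rightarrow> int) set" where
  "laufer_set V E b Z = {Z'' \<in> lattice V. (\<forall>n\<in>nodes V E. Z'' n = Z n)
      \<and> (\<forall>v\<in>V - nodes V E. iform_E V E b Z'' v \<le> 0)}"

definition laufer :: "'a set \<Rightarrow> ('a \<Rightarrow> 'a \<Rightarrow> bool) \<Rightarrow> ('a \<Rightarrow> int) \<Rightarrow> ('a \<Rightarrow> int) \<Rightarrow> ('a \<Rightarrow> int)" where
  "laufer V E b Z = (THE Z''. Z'' \<in> laufer_set V E b Z \<and>
      (\<forall>Y\<in>laufer_set V E b Z. \<forall>v. Z'' v \<le> Y v))"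

definition chain_det :: "('a \<Rightarrow> 'a \<Rightarrow> bool) \<Rightarrow> ('a \<Rightarrow> int) \<Rightarrow> 'a list \<Rightarrow> int" where
  "chain_det E b vs = det (mat (length vs) (length vs)
      (\<lambda>(i, j). - imat E b (vs ! i) (vs ! j)))"

end

theory Submission
  imports Defs
begin

text \<open>Write \<open>z(0) = m\<^sub>n\<close>, \<open>z(j) = m\<^sub>v\<^sub>j\<close> and \<open>z(s+1) = m\<^sub>n\<^sub>'\<close> (or \<open>0\<close> for a leg).
  Along the chain the conditions \<open>(Z, E\<^sub>v\<^sub>j) \<le> 0\<close> read \<open>z(j-1) + z(j+1) \<le> b\<^sub>v\<^sub>j z(j)\<close>.
  The determinants \<open>a(j)\<close> of the tails \<open>v\<^sub>j, \<dots>, v\<^sub>s\<close> satisfy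
  \<open>a(j) = b\<^sub>v\<^sub>j a(j+1) - a(j+2)\<close> and are positive, so multiplying the \<open>j\<close>-th inequality by
  \<open>a(j+1)\<close> and telescoping gives \<open>\<alpha> z(1) \<ge> \<beta> z(0) + z(s+1)\<close>. Conversely, choosing
  \<open>z(1), \<dots>, z(s)\<close> greedily, each the least value this bound permits, solves the inequalities;
  replacing \<open>Z\<close> on the chain by this solution gives another element of the Laufer set, and
  minimality of \<open>Z = x(Z)\<close> gives the reverse inequality. Minimality is available because, by
  negative definiteness, the Laufer set is nonempty, bounded below and closed under pointwise
  minima, so it has a least element.\<close>

lemma det_tridiagonal:
  fixes f :: "nat \<times> nat \<Rightarrow> 'a :: comm_ring_1"
  assumes k: "2 \<le> k"
    and above: "\<And>i j. i + 1 < j \<Longrightarrow> j < k \<Longrightarrow> f (i, j) = 0"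
    and below: "\<And>i j. j + 1 < i \<Longrightarrow> i < k \<Longrightarrow> f (i, j) = 0"
  shows "det (mat k k f) = f (0, 0) * det (mat (k - 1) (k - 1) (\<lambda>(i, j). f (i + 1, j + 1)))
     - f (0, 1) * f (1, 0) * det (mat (k - 2) (k - 2) (\<lambda>(i, j). f (i + 2, j + 2)))"
proof -
  define A where "A = mat k k f"
  have A: "A \<in> carrier_mat k k" unfolding A_def by simp
  have "det A = (\<Sum>i<k. A $$ (i, 0) * cofactor A i 0)"
    by (rule laplace_expansion_column[OF A]) (use k in auto)
  also have "\<dots> = (\<Sum>i<2. A $$ (i, 0) * cofactor A i 0)"
    by (rule sum.mono_neutral_right) (use k below in \<open>auto simp: A_def\<close>)
  finally have det_A: "det A = A $$ (0, 0) * cofactor A 0 0 + A $$ (1, 0) * cofactor A 1 0"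
    by (simp add: numeral_2_eq_2)
  have minor_00: "mat_delete A 0 0 = mat (k - 1) (k - 1) (\<lambda>(i, j). f (i + 1, j + 1))"
    unfolding A_def mat_delete_def by (rule eq_matI) auto
  have minor_10: "det (mat_delete A 1 0) = f (0, 1) * det (mat (k - 2) (k - 2) (\<lambda>(i, j). f (i + 2, j + 2)))"
  proof -
    define B where "B = mat_delete A 1 0"
    have B: "B \<in> carrier_mat (k - 1) (k - 1)" unfolding B_def A_def mat_delete_def by simp
    have "det B = (\<Sum>j<k - 1. B $$ (0, j) * cofactor B 0 j)"
      by (rule laplace_expansion_row[OF B]) (use k in auto)
    also have "\<dots> = (\<Sum>j<1. B $$ (0, j) * cofactor B 0 j)"
      by (rule sum.mono_neutral_right) (use k above in \<open>auto simp: B_def A_def mat_delete_def\<close>)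
    also have "\<dots> = B $$ (0, 0) * det (mat_delete B 0 0)" by (simp add: cofactor_def)
    also have "mat_delete B 0 0 = mat (k - 2) (k - 2) (\<lambda>(i, j). f (i + 2, j + 2))"
      unfolding B_def A_def mat_delete_def by (rule eq_matI) (use k in auto)
    also have "B $$ (0, 0) = f (0, 1)" unfolding B_def A_def mat_delete_def using k by auto
    finally show ?thesis unfolding B_def by simp
  qed
  show ?thesis using det_A minor_00 minor_10 k unfolding A_def by (simp add: cofactor_def)
qed

lemma chain_det_Nil: "chain_det E b [] = 1"
  unfolding chain_det_def by simp

lemma chain_det_single: "chain_det E b [v] = b v"
  unfolding chain_det_def by (subst det_single) (auto simp: imat_def)

lemma ceiling_mult_le: "real_of_int \<lceil>x\<rceil> * real_of_int m \<le> x * real_of_int m + \<bar>real_of_int m\<bar>"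
proof (cases "0 \<le> m")
  case True
  have "real_of_int \<lceil>x\<rceil> * real_of_int m \<le> (x + 1) * real_of_int m"
    using True by (intro mult_right_mono) linarith+
  then show ?thesis using True by (simp add: algebra_simps)
next
  case False
  have "real_of_int \<lceil>x\<rceil> * real_of_int m \<le> x * real_of_int m"
    using False by (intro mult_right_mono_neg) linarith+
  then show ?thesis by simp
qed

lemma sum_set_conv_sum_nth:
  assumes "distinct ws"
  shows "(\<Sum>x\<in>set ws. h x) = (\<Sum>i<length ws. h (ws ! i))"
  using sum.reindex_bij_betw[OF bij_betw_nth[OF assms refl refl], of h] by simp

lemma least_of_min_closed:
  fixes A :: "('a \<Rightarrow> int) set" and L :: "'a \<Rightarrow> int"
  assumes finite: "finite V" and nonempty: "Y0 \<in> A"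
    and bounded: "\<And>Y a. Y \<in> A \<Longrightarrow> L a \<le> Y a"
    and support: "\<And>Y a. Y \<in> A \<Longrightarrow> a \<notin> V \<Longrightarrow> Y a = 0"
    and min_closed: "\<And>Y1 Y2. Y1 \<in> A \<Longrightarrow> Y2 \<in> A \<Longrightarrow> (\<lambda>a. min (Y1 a) (Y2 a)) \<in> A"
  shows "\<exists>Z0\<in>A. \<forall>Y\<in>A. \<forall>a. Z0 a \<le> Y a"
proof -
  define excess where "excess Y = nat ((\<Sum>a\<in>V. Y a) - (\<Sum>a\<in>V. L a))" for Y :: "'a \<Rightarrow> int"
  obtain Z0 where Z0: "Z0 \<in> A" and Z0_min: "\<And>Y. Y \<in> A \<Longrightarrow> excess Z0 \<le> excess Y"
    using ex_has_least_nat[of "\<lambda>Y. Y \<in> A" Y0 excess] nonempty by blast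
  have sum_L: "(\<Sum>a\<in>V. L a) \<le> (\<Sum>a\<in>V. Y a)" if "Y \<in> A" for Y
    by (rule sum_mono) (rule bounded[OF that])
  show ?thesis
  proof (intro bexI ballI allI)
    fix Y a assume Y: "Y \<in> A"
    define M where "M a = min (Z0 a) (Y a)" for a
    have M: "M \<in> A" unfolding M_def by (rule min_closed[OF Z0 Y])
    have "excess Z0 \<le> excess M" by (rule Z0_min[OF M])
    then have "(\<Sum>a\<in>V. Z0 a - M a) \<le> 0"
      using sum_L[OF M] sum_L[OF Z0] unfolding excess_def by (simp add: sum_subtractf)
    moreover have "\<And>a. 0 \<le> Z0 a - M a" unfolding M_def by simp
    ultimately have "\<forall>a\<in>V. Z0 a - M a = 0"
      using sum_nonneg_eq_0_iff[OF finite, of "\<lambda>a. Z0 a - M a"] by (simp add: sum_nonneg antisym)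
    then show "Z0 a \<le> Y a"
    proof (cases "a \<in> V")
      case False
      then show ?thesis using support[OF Z0] support[OF Y] by simp
    qed (auto simp: M_def)
  qed (fact Z0)
qed

lemma continuant_pos:
  fixes a B :: "nat \<Rightarrow> int"
  assumes rec: "\<And>j. 1 \<le> j \<Longrightarrow> j \<le> s \<Longrightarrow> a j = B j * a (j + 1) - a (j + 2)"
    and last: "a (s + 1) = 1" "a (s + 2) = 0"
    and B_ge2: "\<And>j. 1 \<le> j \<Longrightarrow> j \<le> s \<Longrightarrow> 2 \<le> B j"
    and j: "1 \<le> j" "j \<le> s + 1"
  shows "0 < a j"
proof -
  have "0 \<le> a (j + 1) \<and> a (j + 1) < a j" using j(2,1)
  proof (induction j rule: inc_induct)
    case base
    then show ?case using last by simp
  next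
    case (step j)
    then have IH: "0 \<le> a (j + 2)" "a (j + 2) < a (j + 1)" by simp_all
    have "2 * a (j + 1) \<le> B j * a (j + 1)"
      using B_ge2[of j] step IH by (intro mult_right_mono) auto
    moreover have "a j = B j * a (j + 1) - a (j + 2)" using rec[of j] step by simp
    ultimately show ?case using IH by (intro conjI) linarith+
  qed
  then show ?thesis by linarith
qed

text \<open>\<open>a j\<close> abstracts the determinant of the tail \<open>v\<^sub>j, \<dots>, v\<^sub>s\<close> of a chain with
  Euler numbers \<open>B\<close>; an integer sequence with \<open>z (j - 1) + z (j + 1) \<le> B j * z j\<close> is the
  restriction to the chain of a cycle with \<open>(z, E\<^sub>v\<^sub>j) \<le> 0\<close>.\<close>

locale continuant =
  fixes a B :: "nat \<Rightarrow> int" and s :: nat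
  assumes length_pos: "1 \<le> s"
    and recurrence: "\<And>j. 1 \<le> j \<Longrightarrow> j \<le> s \<Longrightarrow> a j = B j * a (j + 1) - a (j + 2)"
    and last1: "a (s + 1) = 1" and last2: "a (s + 2) = 0"
    and positive: "\<And>j. 1 \<le> j \<Longrightarrow> j \<le> s + 1 \<Longrightarrow> 0 < a j"
begin

lemma lower_bound:
  fixes z :: "nat \<Rightarrow> int"
  assumes ineq: "\<And>j. 1 \<le> j \<Longrightarrow> j \<le> s \<Longrightarrow> z (j - 1) + z (j + 1) \<le> B j * z j"
  shows "a 2 * z 0 + z (s + 1) \<le> a 1 * z 1"
proof -
  have "a (j + 1) * z (j - 1) + z (s + 1) \<le> a j * z j" if "1 \<le> j" "j \<le> s + 1" for j
    using that(2,1)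
  proof (induction j rule: inc_induct)
    case base
    then show ?case using last1 last2 by simp
  next
    case (step j)
    have IH: "a (j + 2) * z j + z (s + 1) \<le> a (j + 1) * z (j + 1)" using step by simp
    have "a (j + 1) * (z (j - 1) + z (j + 1)) \<le> a (j + 1) * (B j * z j)"
      using ineq[of j] positive[of "j + 1"] step by (simp add: mult_left_mono)
    then have "a (j + 1) * z (j - 1) + z (s + 1) \<le> (B j * a (j + 1) - a (j + 2)) * z j"
      using IH by (simp add: algebra_simps)
    then show ?case using recurrence[of j] step by simp
  qed
  from this[of 1] show ?thesis using length_pos by (simp add: numeral_2_eq_2)
qed

text \<open>Each term is the least value that \<open>lower_bound\<close>, applied to the remaining tail with
  ends \<open>greedy z\<^sub>0 c (j - 1)\<close> and \<open>c\<close>, permits.\<close>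

primrec greedy :: "int \<Rightarrow> int \<Rightarrow> nat \<Rightarrow> int" where
  "greedy z\<^sub>0 c 0 = z\<^sub>0"
| "greedy z\<^sub>0 c (Suc j) =
     \<lceil>(real_of_int (a (j + 2)) * real_of_int (greedy z\<^sub>0 c j) + real_of_int c) / real_of_int (a (j + 1))\<rceil>"

lemma greedy_last: "greedy z\<^sub>0 c (s + 1) = c"
  using last1 last2 by simp

lemma greedy_ineq:
  assumes j: "1 \<le> j" "j \<le> s"
  shows "greedy z\<^sub>0 c (j - 1) + greedy z\<^sub>0 c (j + 1) \<le> B j * greedy z\<^sub>0 c j"
proof -
  let ?z = "greedy z\<^sub>0 c"
  have a_pos: "0 < a j" "0 < a (j + 1)" using positive j by auto
  have "?z j = \<lceil>(real_of_int (a (j + 1)) * real_of_int (?z (j - 1)) + real_of_int c) / real_of_int (a j)\<rceil>"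
    using j by (cases j) (simp_all add: add.commute)
  then have "(real_of_int (a (j + 1)) * real_of_int (?z (j - 1)) + real_of_int c) / real_of_int (a j)
      \<le> real_of_int (?z j)"
    by simp
  then have "real_of_int (a (j + 1) * ?z (j - 1) + c) \<le> real_of_int (a j * ?z j)"
    using a_pos by (simp add: pos_divide_le_eq mult.commute)
  then have "a (j + 2) * ?z j + c \<le> a (j + 1) * (B j * ?z j - ?z (j - 1))"
    using recurrence[OF j] by (simp only: of_int_le_iff) (simp add: algebra_simps)
  then have "real_of_int (a (j + 2) * ?z j + c) \<le> real_of_int (a (j + 1) * (B j * ?z j - ?z (j - 1)))"
    by (simp only: of_int_le_iff)
  then have "(real_of_int (a (j + 2)) * real_of_int (?z j) + real_of_int c) / real_of_int (a (j + 1))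
      \<le> real_of_int (B j * ?z j - ?z (j - 1))"
    using a_pos by (simp add: pos_divide_le_eq mult.commute)
  then have "?z (j + 1) \<le> B j * ?z j - ?z (j - 1)"
    by (simp add: ceiling_le add.commute)
  then show ?thesis by simp
qed

lemma greedy_1_le:
  assumes "a 2 * z\<^sub>0 + c \<le> a 1 * y"
  shows "greedy z\<^sub>0 c 1 \<le> y"
proof -
  have "real_of_int (a 2 * z\<^sub>0 + c) \<le> real_of_int (a 1 * y)"
    using assms by (simp only: of_int_le_iff)
  then have "(real_of_int (a 2) * real_of_int z\<^sub>0 + real_of_int c) / real_of_int (a 1) \<le> real_of_int y"
    using positive[of 1] length_pos by (simp add: pos_divide_le_eq mult.commute)
  then show ?thesis by (simp add: ceiling_le numeral_2_eq_2)
qed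

end

locale plumbing =
  fixes V :: "'a set" and E :: "'a \<Rightarrow> 'a \<Rightarrow> bool" and b :: "'a \<Rightarrow> int"
  assumes graph: "graph_ok V E" and neg_def: "neg_definite V E b"
begin

lemma finite_V: "finite V"
  using graph unfolding graph_ok_def by auto

lemma E_sym: "E v w \<longleftrightarrow> E w v"
  using graph unfolding graph_ok_def by auto

lemma E_irrefl: "\<not> E v v"
  using graph unfolding graph_ok_def by auto

lemma E_in_V: "E v w \<Longrightarrow> v \<in> V"
  using graph unfolding graph_ok_def by auto

lemma nodes_subset: "nodes V E \<subseteq> V"
  unfolding nodes_def by auto

lemma imat_sym: "imat E b v w = imat E b w v"
  unfolding imat_def using E_sym by auto

lemma imat_nonneg: "v \<noteq> w \<Longrightarrow> 0 \<le> imat E b v w"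
  unfolding imat_def by auto

lemma iform_E_neighbours:
  assumes "v \<in> V"
  shows "iform_E V E b Y v = - b v * Y v + (\<Sum>w\<in>{w\<in>V. E v w}. Y w)"
proof -
  have "iform_E V E b Y v = (\<Sum>w\<in>V. (if w = v then - b v * Y v else 0) + (if E v w then Y w else 0))"
    unfolding iform_E_def by (rule sum.cong[OF refl]) (auto simp: imat_def E_irrefl E_sym)
  also have "\<dots> = - b v * Y v + (\<Sum>w\<in>{w\<in>V. E v w}. Y w)"
    using assms finite_V by (simp add: sum.distrib sum.inter_filter)
  finally show ?thesis .
qed

lemma iform_E_split_nodes:
  assumes "\<And>a. a \<in> nodes V E \<Longrightarrow> Y a = Z a"
  shows "iform_E V E b Y v
    = (\<Sum>w\<in>nodes V E. Z w * imat E b w v) + (\<Sum>w\<in>V - nodes V E. Y w * imat E b w v)"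
proof -
  have "iform_E V E b Y v
      = (\<Sum>w\<in>V - nodes V E. Y w * imat E b w v) + (\<Sum>w\<in>nodes V E. Y w * imat E b w v)"
    unfolding iform_E_def by (rule sum.subset_diff[OF nodes_subset finite_V])
  then show ?thesis using assms by simp
qed

lemma imat_det_nonzero:
  assumes ws: "set ws \<subseteq> V" "distinct ws"
  shows "det (mat (length ws) (length ws) (\<lambda>(i, j). real_of_int (imat E b (ws ! j) (ws ! i)))) \<noteq> 0"
    (is "det ?A \<noteq> 0")
proof
  let ?k = "length ws"
  assume "det ?A = 0"
  then obtain y where y: "y \<in> carrier_vec ?k" "y \<noteq> 0\<^sub>v ?k" "?A *\<^sub>v y = 0\<^sub>v ?k"
    using det_0_iff_vec_prod_zero[of ?A ?k] by auto
  obtain i0 where i0: "i0 < ?k" "y $ i0 \<noteq> 0"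
    using y(1,2) by (metis carrier_vecD eq_vecI index_zero_vec(1,2))
  define x where "x a = (if a \<in> set ws then y $ (the_inv_into {..<?k} ((!) ws) a) else 0)" for a
  have x_nth: "x (ws ! i) = y $ i" if "i < ?k" for i
    using that ws unfolding x_def by (auto simp: the_inv_into_f_f inj_on_nth)
  have "ws ! i0 \<in> V" "x (ws ! i0) \<noteq> 0" using i0 ws x_nth by auto
  then have "(\<Sum>v\<in>V. \<Sum>w\<in>V. x v * x w * real_of_int (imat E b v w)) < 0"
    using neg_def unfolding neg_definite_def by blast
  also have "(\<Sum>v\<in>V. \<Sum>w\<in>V. x v * x w * real_of_int (imat E b v w))
      = (\<Sum>v\<in>set ws. \<Sum>w\<in>V. x v * x w * real_of_int (imat E b v w))"
    by (rule sum.mono_neutral_right) (use finite_V ws(1) in \<open>auto simp: x_def\<close>)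
  also have "\<dots> = (\<Sum>v\<in>set ws. \<Sum>w\<in>set ws. x v * x w * real_of_int (imat E b v w))"
    by (intro sum.cong refl sum.mono_neutral_right) (use finite_V ws(1) in \<open>auto simp: x_def\<close>)
  also have "\<dots> = (\<Sum>i<?k. \<Sum>j<?k. y $ i * y $ j * real_of_int (imat E b (ws ! i) (ws ! j)))"
    unfolding sum_set_conv_sum_nth[OF ws(2)] by (simp add: x_nth)
  also have "\<dots> = (\<Sum>i<?k. y $ i * (?A *\<^sub>v y) $ i)"
    using y(1) by (intro sum.cong refl)
      (simp add: scalar_prod_def atLeast0LessThan sum_distrib_left imat_sym mult_ac)
  also have "\<dots> = 0" using y(3) by simp
  finally show False by simp
qed

lemma imat_solvable:
  assumes S: "S \<subseteq> V"
  shows "\<exists>P :: 'a \<Rightarrow> real. \<forall>v\<in>S. (\<Sum>w\<in>S. P w * real_of_int (imat E b w v)) = g v"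
proof -
  obtain ws where ws: "set ws = S" "distinct ws"
    using finite_distinct_list[OF finite_subset[OF S finite_V]] by auto
  define k where "k = length ws"
  define A :: "real mat" where "A = mat k k (\<lambda>(i, j). real_of_int (imat E b (ws ! j) (ws ! i)))"
  have A: "A \<in> carrier_mat k k" unfolding A_def by simp
  have "det A \<noteq> 0" unfolding A_def k_def using imat_det_nonzero S ws by simp
  then have "A \<in> Units (ring_mat TYPE(real) k undefined)" by (rule det_non_zero_imp_unit[OF A])
  then obtain B where B: "A * B = 1\<^sub>m k" "B \<in> carrier_mat k k"
    using mat_inverse[OF A] by (cases "mat_inverse A") force+
  define y where "y = B *\<^sub>v vec k (\<lambda>i. g (ws ! i))"
  have y: "y \<in> carrier_vec k" unfolding y_def using B by simp
  have Ay: "A *\<^sub>v y = vec k (\<lambda>i. g (ws ! i))"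
    unfolding y_def using A B by (simp flip: assoc_mult_mat_vec[OF A B(2)])
  define P where "P a = (if a \<in> S then y $ (the_inv_into {..<k} ((!) ws) a) else 0)" for a
  have P_nth: "P (ws ! i) = y $ i" if "i < k" for i
    using that ws unfolding P_def k_def by (auto simp: the_inv_into_f_f inj_on_nth)
  show ?thesis
  proof (intro exI ballI)
    fix v assume "v \<in> S"
    then obtain i where i: "i < k" "v = ws ! i" using ws k_def by (metis in_set_conv_nth)
    have "(\<Sum>w\<in>S. P w * real_of_int (imat E b w v))
        = (\<Sum>j<k. real_of_int (imat E b (ws ! j) (ws ! i)) * y $ j)"
      unfolding ws(1)[symmetric] sum_set_conv_sum_nth[OF ws(2)] k_def[symmetric]
      using i by (simp add: P_nth mult.commute)
    also have "\<dots> = (A *\<^sub>v y) $ i"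
      using i y unfolding A_def by (simp add: scalar_prod_def atLeast0LessThan)
    also have "\<dots> = g v" using Ay i by simp
    finally show "(\<Sum>w\<in>S. P w * real_of_int (imat E b w v)) = g v" .
  qed
qed

lemma nonpos_of_iform_nonneg:
  fixes D :: "'a \<Rightarrow> real"
  assumes S: "S \<subseteq> V" and support: "\<And>a. a \<notin> S \<Longrightarrow> D a = 0"
    and nonneg: "\<And>v. v \<in> S \<Longrightarrow> 0 \<le> (\<Sum>w\<in>V. D w * real_of_int (imat E b w v))"
    and v: "v \<in> S"
  shows "D v \<le> 0"
proof (rule ccontr)
  assume "\<not> D v \<le> 0"
  define x where "x a = max (D a) 0" for a
  have "v \<in> V" "x v \<noteq> 0" using v S \<open>\<not> D v \<le> 0\<close> unfolding x_def by auto
  then have neg: "(\<Sum>u\<in>V. \<Sum>w\<in>V. x u * x w * real_of_int (imat E b u w)) < 0"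
    using neg_def unfolding neg_definite_def by blast
  \<comment> \<open>Raising the negative entries of \<open>D\<close> to \<open>0\<close> only increases \<open>(D, E\<^sub>u)\<close> where \<open>D u > 0\<close>.\<close>
  have "0 \<le> (\<Sum>u\<in>V. \<Sum>w\<in>V. x u * x w * real_of_int (imat E b u w))"
  proof (rule sum_nonneg)
    fix u assume "u \<in> V"
    have eq: "(\<Sum>w\<in>V. x u * x w * real_of_int (imat E b u w))
        = x u * (\<Sum>w\<in>V. x w * real_of_int (imat E b w u))"
      by (simp add: sum_distrib_left imat_sym mult_ac)
    show "0 \<le> (\<Sum>w\<in>V. x u * x w * real_of_int (imat E b u w))"
    proof (cases "D u \<le> 0")
      case True
      then show ?thesis unfolding eq by (simp add: x_def)
    next
      case False
      then have "u \<in> S" using support by force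
      have "(\<Sum>w\<in>V. D w * real_of_int (imat E b w u)) \<le> (\<Sum>w\<in>V. x w * real_of_int (imat E b w u))"
      proof (rule sum_mono)
        fix w assume "w \<in> V"
        show "D w * real_of_int (imat E b w u) \<le> x w * real_of_int (imat E b w u)"
          using False imat_nonneg[of w u] by (cases "w = u") (auto simp: x_def intro: mult_right_mono)
      qed
      then have "0 \<le> (\<Sum>w\<in>V. x w * real_of_int (imat E b w u))"
        using nonneg[OF \<open>u \<in> S\<close>] by linarith
      then show ?thesis unfolding eq by (simp add: x_def)
    qed
  qed
  then show False using neg by simp
qed

lemma laufer_set_min_closed:
  assumes "Y1 \<in> laufer_set V E b Z" "Y2 \<in> laufer_set V E b Z"
  shows "(\<lambda>a. min (Y1 a) (Y2 a)) \<in> laufer_set V E b Z"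
proof -
  have iform_min_le: "iform_E V E b (\<lambda>a. min (Y1 a) (Y2 a)) v \<le> iform_E V E b Y v"
    if "Y v = min (Y1 v) (Y2 v)" "\<And>a. min (Y1 a) (Y2 a) \<le> Y a" for Y v
    unfolding iform_E_def
  proof (rule sum_mono)
    fix w assume "w \<in> V"
    show "min (Y1 w) (Y2 w) * imat E b w v \<le> Y w * imat E b w v"
      using that imat_nonneg[of w v] by (cases "w = v") (auto intro: mult_right_mono)
  qed
  have "iform_E V E b (\<lambda>a. min (Y1 a) (Y2 a)) v \<le> 0" if "v \<in> V - nodes V E" for v
  proof (cases "Y1 v \<le> Y2 v")
    case True
    then have "iform_E V E b (\<lambda>a. min (Y1 a) (Y2 a)) v \<le> iform_E V E b Y1 v"
      by (intro iform_min_le) auto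
    moreover have "iform_E V E b Y1 v \<le> 0" using assms(1) that unfolding laufer_set_def by blast
    ultimately show ?thesis by linarith
  next
    case False
    then have "iform_E V E b (\<lambda>a. min (Y1 a) (Y2 a)) v \<le> iform_E V E b Y2 v"
      by (intro iform_min_le) auto
    moreover have "iform_E V E b Y2 v \<le> 0" using assms(2) that unfolding laufer_set_def by blast
    ultimately show ?thesis by linarith
  qed
  then show ?thesis using assms unfolding laufer_set_def lattice_def by auto
qed

lemma laufer_set_nonempty: "\<exists>Y. Y \<in> laufer_set V E b Z"
proof -
  define W where "W = V - nodes V E"
  have W: "W \<subseteq> V" "finite W" using finite_V unfolding W_def by auto
  obtain P :: "'a \<Rightarrow> real" where P: "\<And>v. v \<in> W \<Longrightarrow> (\<Sum>w\<in>W. P w * real_of_int (imat E b w v)) = -1"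
    using imat_solvable[OF W(1), of "\<lambda>_. -1"] by auto
  define d where "d v = (\<Sum>w\<in>nodes V E. Z w * imat E b w v)" for v
  define t where "t = (\<Sum>v\<in>W. \<bar>d v\<bar> + (\<Sum>w\<in>W. \<bar>imat E b w v\<bar>))"
  have t: "\<bar>d v\<bar> + (\<Sum>w\<in>W. \<bar>imat E b w v\<bar>) \<le> t" if "v \<in> W" for v
    unfolding t_def using that W(2) by (intro member_le_sum) (auto intro: sum_nonneg)
  \<comment> \<open>Rounding \<open>t P\<close> up changes each \<open>(\<cdot>, E\<^sub>v)\<close> by at most \<open>\<Sum>\<^sub>w |(E\<^sub>w, E\<^sub>v)|\<close>.\<close>
  define Y where "Y a = (if a \<in> W then \<lceil>real_of_int t * P a\<rceil> else if a \<in> V then Z a else 0)" for a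
  have "iform_E V E b Y v \<le> 0" if v: "v \<in> W" for v
  proof -
    have "real_of_int (\<Sum>w\<in>W. Y w * imat E b w v)
        = (\<Sum>w\<in>W. real_of_int \<lceil>real_of_int t * P w\<rceil> * real_of_int (imat E b w v))"
      by (simp add: Y_def)
    also have "\<dots> \<le> (\<Sum>w\<in>W. real_of_int t * P w * real_of_int (imat E b w v)
        + \<bar>real_of_int (imat E b w v)\<bar>)"
      by (intro sum_mono ceiling_mult_le)
    also have "\<dots> = - real_of_int t + real_of_int (\<Sum>w\<in>W. \<bar>imat E b w v\<bar>)"
      using P[OF v] by (simp add: sum.distrib mult.assoc flip: sum_distrib_left)
    finally have "(\<Sum>w\<in>W. Y w * imat E b w v) \<le> - t + (\<Sum>w\<in>W. \<bar>imat E b w v\<bar>)"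
      by linarith
    moreover have "iform_E V E b Y v = d v + (\<Sum>w\<in>W. Y w * imat E b w v)"
      unfolding d_def W_def by (rule iform_E_split_nodes) (use nodes_subset in \<open>auto simp: Y_def W_def\<close>)
    ultimately show ?thesis using t[OF v] by linarith
  qed
  then have "Y \<in> laufer_set V E b Z"
    unfolding laufer_set_def lattice_def W_def using nodes_subset by (auto simp: Y_def W_def)
  then show ?thesis by blast
qed

lemma laufer_set_bounded_below: "\<exists>L. \<forall>Y\<in>laufer_set V E b Z. \<forall>a. L a \<le> Y a"
proof -
  define W where "W = V - nodes V E"
  have W: "W \<subseteq> V" unfolding W_def by auto
  obtain Q :: "'a \<Rightarrow> real" where Q: "\<And>v. v \<in> W \<Longrightarrow>
      (\<Sum>w\<in>W. Q w * real_of_int (imat E b w v)) = - real_of_int (\<Sum>w\<in>nodes V E. Z w * imat E b w v)"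
    using imat_solvable[OF W, of "\<lambda>v. - real_of_int (\<Sum>w\<in>nodes V E. Z w * imat E b w v)"]
    by blast
  define L where "L a = (if a \<in> W then \<lfloor>Q a\<rfloor> else if a \<in> V then Z a else 0)" for a
  show ?thesis
  proof (intro exI ballI allI)
    fix Y a assume Y: "Y \<in> laufer_set V E b Z"
    then have Y_nodes: "\<And>a. a \<in> nodes V E \<Longrightarrow> Y a = Z a"
      and Y_outside: "\<And>a. a \<notin> V \<Longrightarrow> Y a = 0"
      and Y_laufer: "\<And>v. v \<in> W \<Longrightarrow> iform_E V E b Y v \<le> 0"
      unfolding laufer_set_def lattice_def W_def by auto
    define D where "D a = (if a \<in> W then Q a - real_of_int (Y a) else 0)" for a
    have "D a \<le> 0" if "a \<in> W"
    proof (rule nonpos_of_iform_nonneg[OF W _ _ that])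
      show "\<And>a. a \<notin> W \<Longrightarrow> D a = 0" unfolding D_def by simp
      fix v assume v: "v \<in> W"
      have "(\<Sum>w\<in>V. D w * real_of_int (imat E b w v)) = (\<Sum>w\<in>W. D w * real_of_int (imat E b w v))"
        by (rule sum.mono_neutral_right) (use finite_V W in \<open>auto simp: D_def\<close>)
      also have "\<dots> = (\<Sum>w\<in>W. Q w * real_of_int (imat E b w v))
          - real_of_int (\<Sum>w\<in>W. Y w * imat E b w v)"
        by (simp add: D_def sum_subtractf algebra_simps)
      also have "\<dots> = - real_of_int (iform_E V E b Y v)"
        using Q[OF v] iform_E_split_nodes[OF Y_nodes] unfolding W_def by simp
      finally show "0 \<le> (\<Sum>w\<in>V. D w * real_of_int (imat E b w v))"
        using Y_laufer[OF v] by simp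
    qed
    then show "L a \<le> Y a"
      using Y_nodes Y_outside unfolding L_def D_def W_def by (auto simp: floor_le_iff)
  qed
qed

lemma laufer_fixpoint:
  assumes "laufer V E b Z = Z"
  shows laufer_fixpoint_mem: "Z \<in> laufer_set V E b Z"
    and laufer_fixpoint_le: "Y \<in> laufer_set V E b Z \<Longrightarrow> Z v \<le> Y v"
proof -
  obtain Y0 where "Y0 \<in> laufer_set V E b Z" using laufer_set_nonempty ..
  moreover obtain L where "\<forall>Y\<in>laufer_set V E b Z. \<forall>a. L a \<le> Y a" using laufer_set_bounded_below ..
  ultimately have "\<exists>Z0\<in>laufer_set V E b Z. \<forall>Y\<in>laufer_set V E b Z. \<forall>a. Z0 a \<le> Y a"
    by (intro least_of_min_closed[OF finite_V, of Y0 _ L])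
      (auto simp: laufer_set_min_closed, simp add: laufer_set_def lattice_def)
  then have "\<exists>!Z0. Z0 \<in> laufer_set V E b Z \<and> (\<forall>Y\<in>laufer_set V E b Z. \<forall>a. Z0 a \<le> Y a)"
    by (auto intro!: ex_ex1I ext antisym)
  then have "laufer V E b Z \<in> laufer_set V E b Z
      \<and> (\<forall>Y\<in>laufer_set V E b Z. \<forall>a. laufer V E b Z a \<le> Y a)"
    unfolding laufer_def by (rule theI')
  then show "Z \<in> laufer_set V E b Z" "Y \<in> laufer_set V E b Z \<Longrightarrow> Z v \<le> Y v"
    using assms by auto
qed

lemma chain_neighbours:
  assumes n: "n \<in> nodes V E"
    and vs: "set vs \<subseteq> V" "distinct vs" "set vs \<inter> nodes V E = {}"
    and adj_n: "E n (vs ! 0)" and adj_chain: "\<forall>j. j + 1 < length vs \<longrightarrow> E (vs ! j) (vs ! (j + 1))"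
    and X: "X \<subseteq> nodes V E" "n \<notin> X" "\<And>x. x \<in> X \<Longrightarrow> E (last vs) x"
    and i: "i < length vs"
    and degree: "degree V E (vs ! i) = (if i + 1 < length vs then 2 else card X + 1)"
  shows "{w\<in>V. E (vs ! i) w}
    = (if i = 0 then {n} else {vs ! (i - 1)}) \<union> (if i + 1 < length vs then {vs ! (i + 1)} else X)"
proof -
  define p where "p = (if i = 0 then n else vs ! (i - 1))"
  define R where "R = (if i + 1 < length vs then {vs ! (i + 1)} else X)"
  have not_node: "vs ! j \<notin> nodes V E" if "j < length vs" for j
    using vs(3) nth_mem[OF that] by blast
  have finite_R: "finite R"
    unfolding R_def using finite_subset[OF X(1) finite_subset[OF nodes_subset finite_V]] by auto
  have p: "p \<in> V \<and> E (vs ! i) p"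
  proof (cases "i = 0")
    case True
    then show ?thesis using adj_n n nodes_subset E_sym unfolding p_def by auto
  next
    case False
    then have "E (vs ! (i - 1)) (vs ! i)" using adj_chain[rule_format, of "i - 1"] i by simp
    then show ?thesis using False vs(1) i E_sym unfolding p_def by auto
  qed
  have R: "R \<subseteq> {w\<in>V. E (vs ! i) w}"
  proof (cases "i + 1 < length vs")
    case True
    then show ?thesis using adj_chain vs(1) unfolding R_def by auto
  next
    case False
    then have "i = length vs - 1" using i by linarith
    moreover have "vs \<noteq> []" using i by auto
    ultimately have "vs ! i = last vs" by (simp add: last_conv_nth)
    then show ?thesis using False X(1,3) nodes_subset unfolding R_def by auto
  qed
  have "p \<notin> R"
  proof (cases "i = 0")
    case True
    then show ?thesis using X(2) n not_node[of 1] unfolding p_def R_def by auto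
  next
    case False
    moreover have "vs ! (i - 1) \<notin> nodes V E" using not_node i by simp
    ultimately show ?thesis using X(1) i vs(2) unfolding p_def R_def by (auto simp: nth_eq_iff_index_eq)
  qed
  then have "card (insert p R) = degree V E (vs ! i)"
    using finite_R degree unfolding R_def by auto
  then have "{w\<in>V. E (vs ! i) w} = insert p R"
    using card_subset_eq[of "{w\<in>V. E (vs ! i) w}" "insert p R"] p R finite_V
    unfolding degree_def by auto
  then show ?thesis unfolding p_def R_def by auto
qed

end

text \<open>A chain \<open>vs\<close> attached to the node \<open>n\<close>; \<open>X\<close> is the set of neighbours of its last
  vertex outside the chain: \<open>{n'}\<close> for a bamboo ending at the node \<open>n'\<close>, \<open>{}\<close> for a leg.\<close>

locale plumbing_chain = plumbing +
  fixes n :: 'a and vs :: "'a list" and X :: "'a set"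
  assumes n_node: "n \<in> nodes V E"
    and vs_nonempty: "vs \<noteq> []"
    and vs_V: "set vs \<subseteq> V"
    and vs_distinct: "distinct vs"
    and vs_nonnode: "set vs \<inter> nodes V E = {}"
    and X_nodes: "X \<subseteq> nodes V E"
    and n_notin_X: "n \<notin> X"
    and neighbours: "\<And>i. i < length vs \<Longrightarrow> {w\<in>V. E (vs ! i) w}
      = (if i = 0 then {n} else {vs ! (i - 1)}) \<union> (if i + 1 < length vs then {vs ! (i + 1)} else X)"
    and b_chain: "\<And>i. i < length vs \<Longrightarrow> 2 \<le> b (vs ! i) \<or> (length vs = 1 \<and> b (vs ! 0) = 1)"
begin

lemma nth_V: "i < length vs \<Longrightarrow> vs ! i \<in> V"
  using vs_V by auto

lemma nth_not_node: "i < length vs \<Longrightarrow> vs ! i \<notin> nodes V E"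
  using vs_nonnode nth_mem by blast

lemma nth_ne_n: "i < length vs \<Longrightarrow> vs ! i \<noteq> n"
  using nth_not_node n_node by blast

lemma nth_notin_X: "i < length vs \<Longrightarrow> vs ! i \<notin> X"
  using nth_not_node X_nodes by blast

lemma finite_X: "finite X"
  using finite_subset[OF X_nodes finite_subset[OF nodes_subset finite_V]] .

lemma adjacent_iff:
  assumes "i < length vs" "j < length vs"
  shows "E (vs ! i) (vs ! j) \<longleftrightarrow> j + 1 = i \<or> j = i + 1"
proof -
  have "E (vs ! i) (vs ! j) \<longleftrightarrow> vs ! j \<in> {w\<in>V. E (vs ! i) w}" using nth_V[OF assms(2)] by simp
  also have "\<dots> \<longleftrightarrow> j + 1 = i \<or> j = i + 1"
    unfolding neighbours[OF assms(1)]
    using assms nth_ne_n[OF assms(2)] nth_notin_X[OF assms(2)]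
    by (auto simp: nth_eq_iff_index_eq[OF vs_distinct])
  finally show ?thesis .
qed

lemma chain_det_drop:
  assumes p: "p + 1 < length vs"
  shows "chain_det E b (drop p vs)
    = b (vs ! p) * chain_det E b (drop (p + 1) vs) - chain_det E b (drop (p + 2) vs)"
proof -
  define k where "k = length vs - p"
  define f where "f = (\<lambda>(i, j). - imat E b (drop p vs ! i) (drop p vs ! j))"
  have drop_nth: "drop p vs ! i = vs ! (p + i)" if "i < k" for i using that p k_def by simp
  have k: "2 \<le> k" using p k_def by simp
  have far: "f (i, j) = 0" if "i + 1 < j \<or> j + 1 < i" "i < k" "j < k" for i j
    using that drop_nth adjacent_iff[of "p + i" "p + j"] k_def
    unfolding f_def imat_def by (auto simp: nth_eq_iff_index_eq[OF vs_distinct])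
  have "chain_det E b (drop p vs) = det (mat k k f)" unfolding chain_det_def f_def k_def by simp
  also have "\<dots> = f (0, 0) * det (mat (k - 1) (k - 1) (\<lambda>(i, j). f (i + 1, j + 1)))
      - f (0, 1) * f (1, 0) * det (mat (k - 2) (k - 2) (\<lambda>(i, j). f (i + 2, j + 2)))"
    by (rule det_tridiagonal[OF k]) (use far in auto)
  also have "mat (k - 1) (k - 1) (\<lambda>(i, j). f (i + 1, j + 1))
      = mat (length (drop (p + 1) vs)) (length (drop (p + 1) vs))
          (\<lambda>(i, j). - imat E b (drop (p + 1) vs ! i) (drop (p + 1) vs ! j))"
    by (rule eq_matI) (auto simp: f_def k_def add_ac)
  also have "mat (k - 2) (k - 2) (\<lambda>(i, j). f (i + 2, j + 2))
      = mat (length (drop (p + 2) vs)) (length (drop (p + 2) vs))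
          (\<lambda>(i, j). - imat E b (drop (p + 2) vs ! i) (drop (p + 2) vs ! j))"
    by (rule eq_matI) (auto simp: f_def k_def add_ac)
  also have "f (0, 0) = b (vs ! p)" using drop_nth[of 0] k unfolding f_def imat_def by simp
  also have "f (0, 1) * f (1, 0) = 1"
    using drop_nth[of 0] drop_nth[of 1] k adjacent_iff[of p "p + 1"] adjacent_iff[of "p + 1" p] p
    unfolding f_def imat_def by (auto simp: nth_eq_iff_index_eq[OF vs_distinct])
  finally show ?thesis unfolding chain_det_def by simp
qed

text \<open>\<open>cont j\<close> is the determinant of the tail \<open>v\<^sub>j, \<dots>, v\<^sub>s\<close> (vertices are numbered from
  \<open>1\<close>, list positions from \<open>0\<close>), so \<open>cont 1 = \<alpha>\<close> and \<open>cont 2 = \<beta>\<close>.\<close>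

definition cont :: "nat \<Rightarrow> int" where
  "cont j = (if j \<le> length vs + 1 then chain_det E b (drop (j - 1) vs) else 0)"

definition coef :: "nat \<Rightarrow> int" where
  "coef j = b (vs ! (j - 1))"

lemma cont_recurrence:
  assumes j: "1 \<le> j" "j \<le> length vs"
  shows "cont j = coef j * cont (j + 1) - cont (j + 2)"
proof (cases "j = length vs")
  case True
  have "drop (j - 1) vs = vs ! (j - 1) # drop j vs"
    using Cons_nth_drop_Suc[of "j - 1" vs] j by simp
  then have "drop (j - 1) vs = [vs ! (j - 1)]" using True by simp
  then show ?thesis using True unfolding cont_def coef_def by (simp add: chain_det_single chain_det_Nil)
next
  case False
  then have "j - 1 + 1 < length vs" using j by simp
  from chain_det_drop[OF this] show ?thesis
    using j False unfolding cont_def coef_def by (simp add: Suc_diff_le numeral_2_eq_2)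
qed

sublocale continuant cont coef "length vs"
proof
  show "1 \<le> length vs" using vs_nonempty by (simp add: Suc_le_eq)
  show last1: "cont (length vs + 1) = 1" unfolding cont_def by (simp add: chain_det_Nil)
  show last2: "cont (length vs + 2) = 0" unfolding cont_def by simp
  show rec: "\<And>j. 1 \<le> j \<Longrightarrow> j \<le> length vs \<Longrightarrow> cont j = coef j * cont (j + 1) - cont (j + 2)"
    by (rule cont_recurrence)
  fix j assume j: "1 \<le> j" "j \<le> length vs + 1"
  show "0 < cont j"
  proof (cases "length vs = 1")
    case True
    then have "1 \<le> b (vs ! 0)" using b_chain[of 0] by auto
    moreover have "j = 1 \<or> j = 2" using j True by auto
    ultimately show ?thesis
      using True rec[of 1] last1 last2 unfolding coef_def by (auto simp: numeral_2_eq_2)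
  next
    case False
    then have "2 \<le> coef i" if "1 \<le> i" "i \<le> length vs" for i
      using that b_chain[of "i - 1"] unfolding coef_def by auto
    then show ?thesis using continuant_pos[OF rec last1 last2 _ j] by blast
  qed
qed

definition along :: "('a \<Rightarrow> int) \<Rightarrow> nat \<Rightarrow> int" where
  "along Y j = (if j = 0 then Y n else if j \<le> length vs then Y (vs ! (j - 1)) else (\<Sum>w\<in>X. Y w))"

lemma iform_E_chain:
  assumes i: "i < length vs"
  shows "iform_E V E b Y (vs ! i) = along Y i + along Y (i + 2) - coef (i + 1) * along Y (i + 1)"
proof -
  define p where "p = (if i = 0 then n else vs ! (i - 1))"
  define R where "R = (if i + 1 < length vs then {vs ! (i + 1)} else X)"
  have "p \<notin> R"
  proof (cases "i = 0")
    case True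
    then show ?thesis using n_notin_X nth_ne_n[of 1] unfolding p_def R_def by auto
  next
    case False
    then show ?thesis using nth_notin_X[of "i - 1"] i
      unfolding p_def R_def by (auto simp: nth_eq_iff_index_eq[OF vs_distinct])
  qed
  moreover have "finite R" unfolding R_def using finite_X by simp
  moreover have "{w\<in>V. E (vs ! i) w} = insert p R" using neighbours[OF i] unfolding p_def R_def by auto
  ultimately have "(\<Sum>w\<in>{w\<in>V. E (vs ! i) w}. Y w) = Y p + (\<Sum>w\<in>R. Y w)" by simp
  then show ?thesis
    using iform_E_neighbours[OF nth_V[OF i]] i unfolding along_def coef_def p_def R_def by auto
qed

lemma laufer_set_chain_ineq:
  assumes Y: "Y \<in> laufer_set V E b Z" and j: "1 \<le> j" "j \<le> length vs"
  shows "along Y (j - 1) + along Y (j + 1) \<le> coef j * along Y j"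
proof -
  have "iform_E V E b Y (vs ! (j - 1)) \<le> 0"
    using Y nth_V[of "j - 1"] nth_not_node[of "j - 1"] j unfolding laufer_set_def by auto
  then show ?thesis using iform_E_chain[of "j - 1" Y] j by simp
qed

lemma not_adjacent_chain:
  assumes "v \<notin> set vs" "v \<notin> nodes V E" "E v w"
  shows "w \<notin> set vs"
proof
  assume "w \<in> set vs"
  then obtain i where i: "i < length vs" "w = vs ! i" by (auto simp: in_set_conv_nth)
  have "v \<in> {u\<in>V. E (vs ! i) u}" using assms(3) i(2) E_in_V E_sym by auto
  moreover have "v \<noteq> n" "v \<notin> X" using assms(2) n_node X_nodes by auto
  moreover have "v \<noteq> vs ! j" if "j < length vs" for j using assms(1) that by auto
  ultimately show False using neighbours[OF i(1)] i(1) by (auto split: if_splits)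
qed

definition chain_update :: "(nat \<Rightarrow> int) \<Rightarrow> ('a \<Rightarrow> int) \<Rightarrow> 'a \<Rightarrow> int" where
  "chain_update f Y x = (if x \<in> set vs then f (the_inv_into {..<length vs} ((!) vs) x + 1) else Y x)"

lemma chain_update_nth: "i < length vs \<Longrightarrow> chain_update f Y (vs ! i) = f (i + 1)"
  using vs_distinct unfolding chain_update_def by (auto simp: the_inv_into_f_f inj_on_nth)

lemma chain_update_other: "x \<notin> set vs \<Longrightarrow> chain_update f Y x = Y x"
  unfolding chain_update_def by simp

lemma along_chain_update:
  assumes ends: "f 0 = Y n" "f (length vs + 1) = (\<Sum>w\<in>X. Y w)" and j: "j \<le> length vs + 1"
  shows "along (chain_update f Y) j = f j"
proof -
  consider "j = 0" | "1 \<le> j" "j \<le> length vs" | "j = length vs + 1" using j by linarith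
  then show ?thesis
  proof cases
    case 1
    have "chain_update f Y n = Y n" using n_node vs_nonnode by (intro chain_update_other) auto
    then show ?thesis using 1 ends(1) unfolding along_def by simp
  next
    case 2
    then show ?thesis using chain_update_nth[of "j - 1" f Y] unfolding along_def by simp
  next
    case 3
    have "(\<Sum>w\<in>X. chain_update f Y w) = (\<Sum>w\<in>X. Y w)"
      using X_nodes vs_nonnode by (intro sum.cong refl chain_update_other) auto
    then show ?thesis using 3 ends(2) unfolding along_def by simp
  qed
qed

lemma chain_update_mem:
  assumes Y: "Y \<in> laufer_set V E b Z"
    and ends: "f 0 = Y n" "f (length vs + 1) = (\<Sum>w\<in>X. Y w)"
    and ineq: "\<And>j. 1 \<le> j \<Longrightarrow> j \<le> length vs \<Longrightarrow> f (j - 1) + f (j + 1) \<le> coef j * f j"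
  shows "chain_update f Y \<in> laufer_set V E b Z"
proof -
  let ?Y = "chain_update f Y"
  have "iform_E V E b ?Y v \<le> 0" if v: "v \<in> V - nodes V E" for v
  proof (cases "v \<in> set vs")
    case True
    then obtain i where i: "i < length vs" "v = vs ! i" by (auto simp: in_set_conv_nth)
    then have "iform_E V E b ?Y v = f i + f (i + 2) - coef (i + 1) * f (i + 1)"
      using iform_E_chain[OF i(1)] along_chain_update[OF ends] by simp
    then show ?thesis using ineq[of "i + 1"] i by simp
  next
    case False
    have "iform_E V E b ?Y v = iform_E V E b Y v"
      unfolding iform_E_neighbours[OF DiffD1[OF v]]
      using False v not_adjacent_chain[OF False] chain_update_other by simp
    then show ?thesis using Y v unfolding laufer_set_def by auto
  qed
  moreover have "?Y x = Y x" if "x \<notin> V \<or> x \<in> nodes V E" for x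
    using that vs_V vs_nonnode by (intro chain_update_other) auto
  ultimately show ?thesis using Y unfolding laufer_set_def lattice_def by auto
qed

lemma laufer_fixpoint_first:
  assumes fixed: "laufer V E b Z = Z"
  shows "Z (vs ! 0) = \<lceil>(real_of_int (chain_det E b (tl vs)) * real_of_int (Z n)
      + real_of_int (\<Sum>w\<in>X. Z w)) / real_of_int (chain_det E b vs)\<rceil>"
proof -
  let ?g = "greedy (Z n) (\<Sum>w\<in>X. Z w)"
  have Z: "Z \<in> laufer_set V E b Z" by (rule laufer_fixpoint_mem[OF fixed])
  have "chain_update ?g Z \<in> laufer_set V E b Z"
  proof (rule chain_update_mem[OF Z])
    show "?g 0 = Z n" by simp
    show "?g (length vs + 1) = (\<Sum>w\<in>X. Z w)" by (rule greedy_last)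
  next
    fix j assume "1 \<le> j" "j \<le> length vs"
    then show "?g (j - 1) + ?g (j + 1) \<le> coef j * ?g j" by (rule greedy_ineq)
  qed
  then have "Z (vs ! 0) \<le> chain_update ?g Z (vs ! 0)" by (rule laufer_fixpoint_le[OF fixed])
  then have "Z (vs ! 0) \<le> ?g 1" using chain_update_nth[of 0] vs_nonempty by simp
  moreover have "?g 1 \<le> Z (vs ! 0)"
  proof (rule greedy_1_le)
    have "cont 2 * along Z 0 + along Z (length vs + 1) \<le> cont 1 * along Z 1"
      by (rule lower_bound) (rule laufer_set_chain_ineq[OF Z])
    moreover have "along Z 0 = Z n" "along Z 1 = Z (vs ! 0)" "along Z (length vs + 1) = (\<Sum>w\<in>X. Z w)"
      using vs_nonempty unfolding along_def by (simp_all add: Suc_le_eq)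
    ultimately show "cont 2 * Z n + (\<Sum>w\<in>X. Z w) \<le> cont 1 * Z (vs ! 0)" by simp
  qed
  ultimately have "Z (vs ! 0) = ?g 1" by simp
  also have "\<dots> = \<lceil>(real_of_int (cont 2) * real_of_int (Z n)
      + real_of_int (\<Sum>w\<in>X. Z w)) / real_of_int (cont 1)\<rceil>"
    by (simp add: numeral_2_eq_2)
  moreover have "cont 1 = chain_det E b vs" "cont 2 = chain_det E b (tl vs)"
    using vs_nonempty unfolding cont_def by (simp_all add: Suc_le_eq drop_Suc)
  ultimately show ?thesis by simp
qed

end

theorem mainTheorem6:
  fixes V :: "'a set" and E :: "'a \<Rightarrow> 'a \<Rightarrow> bool" and b :: "'a \<Rightarrow> int"
    and n :: 'a and vs :: "'a list" and Z :: "'a \<Rightarrow> int"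
  assumes tree: "is_tree V E"
    and negdef: "neg_definite V E b"
    and n_node: "n \<in> nodes V E"
    and s_pos: "length vs \<ge> 1"
    and vs_V: "set vs \<subseteq> V"
    and vs_dist: "distinct vs"
    and vs_nonnode: "set vs \<inter> nodes V E = {}"
    and adj_n: "E n (vs ! 0)"
    and adj_chain: "\<forall>j. j + 1 < length vs \<longrightarrow> E (vs ! j) (vs ! (j + 1))"
    and b_cond: "\<forall>j < length vs. b (vs ! j) \<ge> 2 \<or>
       (length vs = 1 \<and> degree V E (vs ! 0) = 1 \<and> b (vs ! 0) = 1)"
    and Z_L: "Z \<in> lattice V"
    and fixed: "laufer V E b Z = Z"
  shows "(\<forall>n'. ((\<forall>j < length vs. degree V E (vs ! j) = 2) \<and> E (last vs) n'
              \<and> n' \<in> nodes V E \<and> n' \<noteq> n)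
          \<longrightarrow> Z (vs ! 0) = \<lceil>(real_of_int (chain_det E b (tl vs)) * real_of_int (Z n)
                 + real_of_int (Z n')) / real_of_int (chain_det E b vs)\<rceil>)
       \<and> ((degree V E (last vs) = 1 \<and> (\<forall>j. j + 1 < length vs \<longrightarrow> degree V E (vs ! j) = 2))
          \<longrightarrow> Z (vs ! 0) = \<lceil>(real_of_int (chain_det E b (tl vs)) * real_of_int (Z n))
                 / real_of_int (chain_det E b vs)\<rceil>)"
proof -
  interpret plumbing V E b
    using tree negdef by unfold_locales (simp add: is_tree_def)
  have vs_nonempty: "vs \<noteq> []" using s_pos by auto
  have chain: "plumbing_chain V E b n vs X"
    if X: "X \<subseteq> nodes V E" "n \<notin> X" "\<And>x. x \<in> X \<Longrightarrow> E (last vs) x"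
      and degree: "\<And>i. i < length vs \<Longrightarrow>
        degree V E (vs ! i) = (if i + 1 < length vs then 2 else card X + 1)" for X
    using chain_neighbours[OF n_node vs_V vs_dist vs_nonnode adj_n adj_chain X _ degree]
      graph neg_def n_node vs_nonempty vs_V vs_dist vs_nonnode X b_cond
    by unfold_locales blast+
  show ?thesis
  proof (intro conjI allI impI)
    fix n' assume "(\<forall>j < length vs. degree V E (vs ! j) = 2) \<and> E (last vs) n'
      \<and> n' \<in> nodes V E \<and> n' \<noteq> n"
    then have "plumbing_chain V E b n vs {n'}" by (intro chain) auto
    from plumbing_chain.laufer_fixpoint_first[OF this fixed]
    show "Z (vs ! 0) = \<lceil>(real_of_int (chain_det E b (tl vs)) * real_of_int (Z n)
      + real_of_int (Z n')) / real_of_int (chain_det E b vs)\<rceil>" by simp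
  next
    assume leg: "degree V E (last vs) = 1 \<and> (\<forall>j. j + 1 < length vs \<longrightarrow> degree V E (vs ! j) = 2)"
    have "vs ! i = last vs" if "i < length vs" "\<not> i + 1 < length vs" for i
    proof -
      have "i = length vs - 1" using that by linarith
      then show ?thesis using vs_nonempty by (simp add: last_conv_nth)
    qed
    then have "plumbing_chain V E b n vs {}" using leg by (intro chain) auto
    from plumbing_chain.laufer_fixpoint_first[OF this fixed]
    show "Z (vs ! 0) = \<lceil>(real_of_int (chain_det E b (tl vs)) * real_of_int (Z n))
      / real_of_int (chain_det E b vs)\<rceil>" by simp
  qed
qed

end
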